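(* Let $E=[n]$, let $f:2^E\to\mathbb{R}_{\ge0}$ be a submodular function with Lovász extension $F$, and let $d\in\mathbb{R}^n$ be a nonzero direction. Then \[ \max\{\lambda:\ \lambda d\in P(f)\}=\min\{F(x):\ x\in\mathbb{R}^n_{\ge 0},\ d^\top x=1\}. \]
   Context: For $x\in\mathbb{R}^n$ and $S\subseteq E$ write $x(S)=\sum_{i\in S}x_i$. The extended polymatroid is $P(f)=\{x\in\mathbb{R}^n: x(S)\le f(S)\ \forall S\subseteq E\}$ and the base polytope is $B(f)=\{x\in P(f): x(E)=f(E)\}$. The Lovász extension is $F(x)=\max_{v\in B(f)}v^\top x$; equivalently $F(x)=\sum_{i=1}^n x_{\pi_i}(f(S_i)-f(S_{i-1}))$ where $x_{\pi_1}\ge\cdots\ge x_{\pi_n}$ (ties broken lexicographically), $S_i=\{\pi_1,\dots,\pi_i\}$, $S_0=\emptyset$. *)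

theory Defs
  imports Complex_Main "HOL-Library.Extended_Real"
begin

text \<open>Ground set E = [n] is modelled by a finite type 'a (E = UNIV); vectors in R^n are
  functions 'a \<Rightarrow> real.\<close>

definition xsum :: "('a \<Rightarrow> real) \<Rightarrow> 'a set \<Rightarrow> real" where
  "xsum x S = (\<Sum>i\<in>S. x i)"

definition submodular :: "('a set \<Rightarrow> real) \<Rightarrow> bool" where
  "submodular f \<longleftrightarrow> (\<forall>A B. f (A \<union> B) + f (A \<inter> B) \<le> f A + f B)"

definition polymatroid :: "('a set \<Rightarrow> real) \<Rightarrow> ('a \<Rightarrow> real) set" where
  "polymatroid f = {x. \<forall>S. xsum x S \<le> f S}"

definition base_polytope :: "('a::finite set \<Rightarrow> real) \<Rightarrow> ('a \<Rightarrow> real) set" where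
  "base_polytope f = {x \<in> polymatroid f. xsum x UNIV = f UNIV}"

definition lovasz :: "('a::finite set \<Rightarrow> real) \<Rightarrow> ('a \<Rightarrow> real) \<Rightarrow> real" where
  "lovasz f x = Sup ((\<lambda>v. \<Sum>i\<in>UNIV. v i * x i) ` base_polytope f)"

end

theory Submission
  imports Defs
begin

text \<open>Suppose some \<open>d i > 0\<close> and let \<open>\<lambda>\<^sup>* = min {f S / d(S) | d(S) > 0}\<close>.
  Testing \<open>\<lambda> d \<in> P(f)\<close> on a minimising \<open>S\<close> shows that \<open>\<lambda>\<^sup>*\<close> is the largest feasible \<open>\<lambda>\<close>,
  and \<open>x = 1\<^sub>S / d(S)\<close> gives \<open>F(x) \<le> f S / d(S) = \<lambda>\<^sup>*\<close>. Conversely, by submodularity the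
  tight sets of a point of \<open>P(f)\<close> are closed under union, so raising the coordinates of
  \<open>\<lambda>\<^sup>* d\<close> one at a time until every element lies in a tight set produces a base
  \<open>v \<ge> \<lambda>\<^sup>* d\<close>; hence \<open>F(x) \<ge> v\<^sup>T x \<ge> \<lambda>\<^sup>* d\<^sup>T x = \<lambda>\<^sup>*\<close> for \<open>x \<ge> 0\<close> with \<open>d\<^sup>T x = 1\<close>.
  If \<open>d \<le> 0\<close>, every \<open>\<lambda> \<ge> 0\<close> is feasible on the left and the right-hand side is an
  infimum over the empty set, so both sides are \<open>\<infinity>\<close>.\<close>

lemma xsum_scale: "xsum (\<lambda>i. t * d i) S = t * xsum d S"
  unfolding xsum_def by (simp add: sum_distrib_left)

definition tight :: "('a set \<Rightarrow> real) \<Rightarrow> ('a \<Rightarrow> real) \<Rightarrow> 'a set \<Rightarrow> bool" where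
  "tight f v T \<longleftrightarrow> xsum v T = f T"

lemma base_polytope_iff_tight_UNIV:
  "v \<in> base_polytope f \<longleftrightarrow> v \<in> polymatroid f \<and> tight f v UNIV"
  unfolding base_polytope_def tight_def by auto

lemma polymatroid_tight_Un:
  fixes f :: "'a::finite set \<Rightarrow> real"
  assumes "submodular f" "v \<in> polymatroid f" "tight f v A" "tight f v B"
  shows "tight f v (A \<union> B)"
proof -
  have "xsum v (A \<union> B) + xsum v (A \<inter> B) = xsum v A + xsum v B"
    unfolding xsum_def by (rule sum.union_inter) auto
  moreover have "f (A \<union> B) + f (A \<inter> B) \<le> f A + f B"
    using assms(1) unfolding submodular_def by blast
  moreover have "xsum v (A \<union> B) \<le> f (A \<union> B)" "xsum v (A \<inter> B) \<le> f (A \<inter> B)"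
    using assms(2) unfolding polymatroid_def by auto
  ultimately show ?thesis using assms(3,4) unfolding tight_def by linarith
qed

lemma polymatroid_tight_Union:
  fixes f :: "'a::finite set \<Rightarrow> real"
  assumes "submodular f" "v \<in> polymatroid f" "\<T> \<noteq> {}" "\<forall>T\<in>\<T>. tight f v T"
  shows "tight f v (\<Union>\<T>)"
proof -
  have "finite \<T>" by simp
  then show ?thesis using assms(3,4)
  proof (induction \<T> rule: finite_ne_induct)
    case (insert T \<T>)
    then show ?case using polymatroid_tight_Un[OF assms(1,2)] by simp
  qed simp
qed

lemma polymatroid_tight_mono:
  assumes "w \<in> polymatroid f" "\<forall>i. v i \<le> w i" "tight f v T"
  shows "tight f w T"
proof -
  have "xsum v T \<le> xsum w T" unfolding xsum_def using assms(2) by (intro sum_mono) auto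
  moreover have "xsum w T \<le> f T" using assms(1) unfolding polymatroid_def by auto
  ultimately show ?thesis using assms(3) unfolding tight_def by linarith
qed

lemma polymatroid_raise_coordinate:
  fixes f :: "'a::finite set \<Rightarrow> real"
  assumes "v \<in> polymatroid f"
  obtains w T where "w \<in> polymatroid f" "\<forall>i. v i \<le> w i" "e \<in> T" "tight f w T"
proof -
  have v_le: "xsum v S \<le> f S" for S using assms unfolding polymatroid_def by auto
  define slacks where "slacks = (\<lambda>S. f S - xsum v S) ` {S. e \<in> S}"
  define c where "c = Min slacks"
  have "finite slacks" "slacks \<noteq> {}" unfolding slacks_def by auto
  then have "c \<in> slacks" unfolding c_def by (rule Min_in)
  then obtain T where T: "e \<in> T" "c = f T - xsum v T" unfolding slacks_def by blast
  have c_le: "c \<le> f S - xsum v S" if "e \<in> S" for S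
    unfolding c_def slacks_def using that by (intro Min_le) auto
  have c_nonneg: "c \<ge> 0" using T v_le[of T] by simp
  define w where "w = (\<lambda>i. v i + (if i = e then c else 0))"
  have w_sum: "xsum w S = xsum v S + (if e \<in> S then c else 0)" for S
    unfolding w_def xsum_def by (simp add: sum.distrib)
  have "xsum w S \<le> f S" for S
    using w_sum[of S] v_le[of S] c_le[of S] by (cases "e \<in> S") simp_all
  then have "w \<in> polymatroid f" unfolding polymatroid_def by simp
  moreover have "\<forall>i. v i \<le> w i" unfolding w_def using c_nonneg by simp
  moreover have "tight f w T" unfolding tight_def using w_sum[of T] T by simp
  ultimately show ?thesis using that T(1) by blast
qed

lemma polymatroid_cover_by_tight:
  fixes f :: "'a::finite set \<Rightarrow> real"
  assumes "y \<in> polymatroid f"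
  shows "\<exists>v\<in>polymatroid f. (\<forall>i. y i \<le> v i) \<and> (\<forall>e\<in>D. \<exists>T. e \<in> T \<and> tight f v T)"
proof -
  have "finite D" by simp
  then show ?thesis
  proof (induction D rule: finite_induct)
    case empty
    then show ?case using assms by auto
  next
    case (insert e D)
    then obtain v where v: "v \<in> polymatroid f" "\<forall>i. y i \<le> v i"
      and covered: "\<forall>e\<in>D. \<exists>T. e \<in> T \<and> tight f v T" by blast
    obtain w T where w: "w \<in> polymatroid f" "\<forall>i. v i \<le> w i" "e \<in> T" "tight f w T"
      using polymatroid_raise_coordinate[OF v(1)] by metis
    have "\<forall>e\<in>D. \<exists>T. e \<in> T \<and> tight f w T"
      using covered polymatroid_tight_mono[OF w(1,2)] by blast
    moreover have "\<forall>i. y i \<le> w i" using v(2) w(2) order_trans by blast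
    ultimately show ?case using w by blast
  qed
qed

lemma polymatroid_dominated_by_base:
  fixes f :: "'a::finite set \<Rightarrow> real"
  assumes "submodular f" "y \<in> polymatroid f"
  shows "\<exists>v\<in>base_polytope f. \<forall>i. y i \<le> v i"
proof -
  obtain v where v: "v \<in> polymatroid f" "\<forall>i. y i \<le> v i"
    and covered: "\<forall>e. \<exists>T. e \<in> T \<and> tight f v T"
    using polymatroid_cover_by_tight[OF assms(2), of UNIV] by blast
  have cover: "\<Union>{T. tight f v T} = UNIV" using covered by blast
  then have "{T. tight f v T} \<noteq> {}" by auto
  then have "tight f v (\<Union>{T. tight f v T})"
    using polymatroid_tight_Union[OF assms(1) v(1)] by simp
  then have "tight f v UNIV" unfolding cover .
  then show ?thesis using v base_polytope_iff_tight_UNIV by blast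
qed

lemma base_polytope_nonempty:
  fixes f :: "'a::finite set \<Rightarrow> real"
  assumes "submodular f" "f {} \<ge> 0"
  shows "base_polytope f \<noteq> {}"
proof -
  define M where "M = Max (range (\<lambda>S. \<bar>f S\<bar>))"
  have "\<bar>f S\<bar> \<le> M" for S unfolding M_def by (intro Max_ge) auto
  then have "M \<ge> 0" by (meson abs_ge_zero order_trans)
  have "xsum (\<lambda>i. - M) S \<le> f S" for S
  proof (cases "S = {}")
    case False
    then have "real (card S) \<ge> 1" by (simp add: Suc_leI card_gt_0_iff)
    then have "xsum (\<lambda>i. - M) S \<le> - M"
      unfolding xsum_def using \<open>M \<ge> 0\<close> by (simp add: mult_le_cancel_right1)
    then show ?thesis using \<open>\<bar>f S\<bar> \<le> M\<close> by linarith
  qed (simp add: xsum_def assms(2))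
  then have "(\<lambda>i. - M) \<in> polymatroid f" unfolding polymatroid_def by simp
  then show ?thesis using polymatroid_dominated_by_base[OF assms(1)] by blast
qed

lemma bdd_above_base_polytope_inner:
  fixes f :: "'a::finite set \<Rightarrow> real"
  assumes "\<forall>i. x i \<ge> 0"
  shows "bdd_above ((\<lambda>v. \<Sum>i\<in>UNIV. v i * x i) ` base_polytope f)"
proof (rule bdd_aboveI2)
  fix v assume "v \<in> base_polytope f"
  then have "xsum v {i} \<le> f {i}" for i unfolding base_polytope_def polymatroid_def by auto
  then have "v i \<le> f {i}" for i unfolding xsum_def by simp
  then show "(\<Sum>i\<in>UNIV. v i * x i) \<le> (\<Sum>i\<in>UNIV. f {i} * x i)"
    using assms by (intro sum_mono mult_right_mono) auto
qed

lemma polymatroid_inner_le_lovasz: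
  fixes f :: "'a::finite set \<Rightarrow> real"
  assumes "submodular f" "y \<in> polymatroid f" "\<forall>i. x i \<ge> 0"
  shows "(\<Sum>i\<in>UNIV. y i * x i) \<le> lovasz f x"
proof -
  obtain v where v: "v \<in> base_polytope f" "\<forall>i. y i \<le> v i"
    using polymatroid_dominated_by_base[OF assms(1,2)] by blast
  have "(\<Sum>i\<in>UNIV. y i * x i) \<le> (\<Sum>i\<in>UNIV. v i * x i)"
    using v(2) assms(3) by (intro sum_mono mult_right_mono) auto
  also have "\<dots> \<le> lovasz f x" unfolding lovasz_def
    using v(1) bdd_above_base_polytope_inner[OF assms(3)] by (intro cSup_upper) auto
  finally show ?thesis .
qed

lemma lovasz_scaled_indicator_le:
  fixes f :: "'a::finite set \<Rightarrow> real"
  assumes "base_polytope f \<noteq> {}" "c \<ge> 0"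
  shows "lovasz f (\<lambda>i. if i \<in> S then c else 0) \<le> c * f S"
  unfolding lovasz_def
proof (rule cSup_least)
  fix r assume "r \<in> (\<lambda>v. \<Sum>i\<in>UNIV. v i * (if i \<in> S then c else 0)) ` base_polytope f"
  then obtain v where v: "v \<in> base_polytope f"
    and r: "r = (\<Sum>i\<in>UNIV. v i * (if i \<in> S then c else 0))" by blast
  have "r = c * xsum v S"
    unfolding r xsum_def by (simp add: sum_distrib_left if_distrib sum.If_cases mult.commute)
  also have "\<dots> \<le> c * f S"
    using v assms(2) unfolding base_polytope_def polymatroid_def by (intro mult_left_mono) auto
  finally show "r \<le> c * f S" .
qed (use assms(1) in blast)

text \<open>Meaningful only if some \<open>d i > 0\<close>; otherwise this is \<open>Min {}\<close>.\<close>

definition ray_bound :: "('a::finite set \<Rightarrow> real) \<Rightarrow> ('a \<Rightarrow> real) \<Rightarrow> real" where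
  "ray_bound f d = Min ((\<lambda>S. f S / xsum d S) ` {S. xsum d S > 0})"

lemma ray_bound_le:
  fixes f :: "'a::finite set \<Rightarrow> real"
  assumes "xsum d S > 0"
  shows "ray_bound f d \<le> f S / xsum d S"
  unfolding ray_bound_def using assms by (intro Min_le) auto

lemma ray_bound_attained:
  fixes f :: "'a::finite set \<Rightarrow> real"
  assumes "d e > 0"
  obtains S where "xsum d S > 0" "ray_bound f d = f S / xsum d S"
proof -
  have "xsum d {e} > 0" using assms by (simp add: xsum_def)
  then have "(\<lambda>S. f S / xsum d S) ` {S. xsum d S > 0} \<noteq> {}" by blast
  then have "ray_bound f d \<in> (\<lambda>S. f S / xsum d S) ` {S. xsum d S > 0}"
    unfolding ray_bound_def by (intro Min_in) simp_all
  then show ?thesis using that by blast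
qed

lemma ray_in_polymatroid_le_ray_bound:
  fixes f :: "'a::finite set \<Rightarrow> real"
  assumes "d e > 0" "(\<lambda>i. t * d i) \<in> polymatroid f"
  shows "t \<le> ray_bound f d"
proof -
  obtain S where S: "xsum d S > 0" "ray_bound f d = f S / xsum d S"
    using ray_bound_attained[where d = d, OF assms(1)] .
  have "t * xsum d S \<le> f S" using assms(2) by (simp add: polymatroid_def xsum_scale)
  then show ?thesis using S by (simp add: pos_le_divide_eq)
qed

lemma ray_bound_in_polymatroid:
  fixes f :: "'a::finite set \<Rightarrow> real"
  assumes "d e > 0" "\<forall>S. f S \<ge> 0"
  shows "(\<lambda>i. ray_bound f d * d i) \<in> polymatroid f"
  unfolding polymatroid_def mem_Collect_eq xsum_scale
proof (intro allI)
  fix S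
  obtain S\<^sub>0 where "xsum d S\<^sub>0 > 0" "ray_bound f d = f S\<^sub>0 / xsum d S\<^sub>0"
    using ray_bound_attained[where d = d, OF assms(1)] .
  then have nonneg: "ray_bound f d \<ge> 0" using assms(2) by simp
  show "ray_bound f d * xsum d S \<le> f S"
  proof (cases "xsum d S > 0")
    case True
    then show ?thesis using ray_bound_le[OF True] by (simp add: pos_le_divide_eq)
  next
    case False
    then have "ray_bound f d * xsum d S \<le> 0" using nonneg by (simp add: mult_nonneg_nonpos)
    then show ?thesis using assms(2)[rule_format, of S] by linarith
  qed
qed

lemma ray_bound_le_lovasz:
  fixes f :: "'a::finite set \<Rightarrow> real"
  assumes "submodular f" "\<forall>S. f S \<ge> 0" "d e > 0"
    and "\<forall>i. x i \<ge> 0" "(\<Sum>i\<in>UNIV. d i * x i) = 1"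
  shows "ray_bound f d \<le> lovasz f x"
proof -
  have "ray_bound f d = (\<Sum>i\<in>UNIV. ray_bound f d * d i * x i)"
    using assms(5) by (simp add: sum_distrib_left[symmetric] mult.assoc)
  also have "\<dots> \<le> lovasz f x"
    using polymatroid_inner_le_lovasz[OF assms(1) _ assms(4)]
      ray_bound_in_polymatroid[where d = d, OF assms(3,2)] by blast
  finally show ?thesis .
qed

lemma lovasz_attains_ray_bound:
  fixes f :: "'a::finite set \<Rightarrow> real"
  assumes "submodular f" "f {} \<ge> 0" "d e > 0"
  obtains x where "\<forall>i. x i \<ge> 0" "(\<Sum>i\<in>UNIV. d i * x i) = 1" "lovasz f x \<le> ray_bound f d"
proof -
  obtain S where S: "xsum d S > 0" "ray_bound f d = f S / xsum d S"
    using ray_bound_attained[where d = d, OF assms(3)] .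
  define x where "x = (\<lambda>i. if i \<in> S then 1 / xsum d S else 0)"
  have "\<forall>i. x i \<ge> 0" unfolding x_def using S(1) by simp
  moreover have "(\<Sum>i\<in>UNIV. d i * x i) = xsum d S / xsum d S"
    unfolding x_def xsum_def by (simp add: if_distrib sum.If_cases sum_divide_distrib[symmetric])
  moreover have "lovasz f x \<le> ray_bound f d"
    using lovasz_scaled_indicator_le[OF base_polytope_nonempty[OF assms(1,2)], of "1 / xsum d S" S]
      S unfolding x_def by simp
  ultimately show ?thesis using that S(1) by simp
qed

lemma SUP_ray_eq_ray_bound:
  fixes f :: "'a::finite set \<Rightarrow> real"
  assumes "d e > 0" "\<forall>S. f S \<ge> 0"
  shows "(SUP t\<in>{t. (\<lambda>i. t * d i) \<in> polymatroid f}. ereal t) = ereal (ray_bound f d)"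
proof (rule antisym)
  show "(SUP t\<in>{t. (\<lambda>i. t * d i) \<in> polymatroid f}. ereal t) \<le> ereal (ray_bound f d)"
    using ray_in_polymatroid_le_ray_bound[where d = d, OF assms(1)] by (intro SUP_least) simp
qed (use ray_bound_in_polymatroid[where d = d, OF assms] in
    \<open>intro SUP_upper2[of "ray_bound f d"]; simp\<close>)

lemma INF_lovasz_eq_ray_bound:
  fixes f :: "'a::finite set \<Rightarrow> real"
  assumes "submodular f" "\<forall>S. f S \<ge> 0" "d e > 0"
  shows "(INF x\<in>{x. (\<forall>i. x i \<ge> 0) \<and> (\<Sum>i\<in>UNIV. d i * x i) = 1}. ereal (lovasz f x))
    = ereal (ray_bound f d)"
proof (rule antisym)
  obtain x where "\<forall>i. x i \<ge> 0" "(\<Sum>i\<in>UNIV. d i * x i) = 1" "lovasz f x \<le> ray_bound f d"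
    using lovasz_attains_ray_bound[where d = d, OF assms(1) _ assms(3)] assms(2) by blast
  then show "(INF x\<in>{x. (\<forall>i. x i \<ge> 0) \<and> (\<Sum>i\<in>UNIV. d i * x i) = 1}. ereal (lovasz f x))
      \<le> ereal (ray_bound f d)"
    by (intro INF_lower2[of x]) simp_all
qed (use ray_bound_le_lovasz[where d = d, OF assms] in \<open>intro INF_greatest; simp\<close>)

lemma nonpos_ray_in_polymatroid:
  assumes "\<forall>i. d i \<le> 0" "\<forall>S. f S \<ge> 0" "t \<ge> 0"
  shows "(\<lambda>i. t * d i) \<in> polymatroid f"
proof -
  have "xsum d S \<le> 0" for S unfolding xsum_def using assms(1) by (simp add: sum_nonpos)
  then have "t * xsum d S \<le> f S" for S
    using assms(2,3) by (meson mult_nonneg_nonpos order_trans)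
  then show ?thesis by (simp add: polymatroid_def xsum_scale)
qed

lemma sum_mult_nonpos_nonneg_le_0:
  fixes d x :: "'a::finite \<Rightarrow> real"
  assumes "\<forall>i. d i \<le> 0" "\<forall>i. x i \<ge> 0"
  shows "(\<Sum>i\<in>UNIV. d i * x i) \<le> 0"
  using assms by (intro sum_nonpos) (simp add: mult_nonpos_nonneg)

theorem theorem1:
  fixes f :: "'a::finite set \<Rightarrow> real" and d :: "'a \<Rightarrow> real"
  assumes "submodular f" and "\<forall>S. f S \<ge> 0" and "d \<noteq> (\<lambda>i. 0)"
  shows "(SUP t\<in>{t. (\<lambda>i. t * d i) \<in> polymatroid f}. ereal t)
           = (INF x\<in>{x. (\<forall>i. x i \<ge> 0) \<and> (\<Sum>i\<in>UNIV. d i * x i) = 1}. ereal (lovasz f x))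
         \<and> ((\<exists>i. d i > 0) \<longrightarrow>
              (\<exists>t. (\<lambda>i. t * d i) \<in> polymatroid f \<and>
                   (\<forall>s. (\<lambda>i. s * d i) \<in> polymatroid f \<longrightarrow> s \<le> t)) \<and>
              (\<exists>x. (\<forall>i. x i \<ge> 0) \<and> (\<Sum>i\<in>UNIV. d i * x i) = 1 \<and>
                   (\<forall>y. (\<forall>i. y i \<ge> 0) \<and> (\<Sum>i\<in>UNIV. d i * y i) = 1 \<longrightarrow> lovasz f x \<le> lovasz f y)))"
proof (cases "\<exists>i. d i > 0")
  case True
  then obtain e where e: "d e > 0" by blast
  obtain x where x: "\<forall>i. x i \<ge> 0" "(\<Sum>i\<in>UNIV. d i * x i) = 1" "lovasz f x \<le> ray_bound f d"
    using lovasz_attains_ray_bound[where d = d, OF assms(1) _ e] assms(2) by blast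
  have "lovasz f x \<le> lovasz f y" if "\<forall>i. y i \<ge> 0" "(\<Sum>i\<in>UNIV. d i * y i) = 1" for y
    using x(3) ray_bound_le_lovasz[where d = d, OF assms(1,2) e that] by linarith
  then show ?thesis
    using SUP_ray_eq_ray_bound[where d = d, OF e assms(2)]
      INF_lovasz_eq_ray_bound[where d = d, OF assms(1,2) e]
      ray_bound_in_polymatroid[where d = d, OF e assms(2)]
      ray_in_polymatroid_le_ray_bound[where d = d, OF e] x(1,2)
    by (intro conjI impI exI[of _ "ray_bound f d"] exI[of _ x]) auto
next
  case False
  then have d_nonpos: "\<forall>i. d i \<le> 0" by (simp add: not_less)
  have sup: "(SUP t\<in>{t. (\<lambda>i. t * d i) \<in> polymatroid f}. ereal t) = \<infinity>"
    using nonpos_ray_in_polymatroid[OF d_nonpos assms(2), of "real _"] by (intro SUP_PInfty) auto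
  have infeasible: "{x. (\<forall>i. x i \<ge> 0) \<and> (\<Sum>i\<in>UNIV. d i * x i) = 1} = {}"
    by (fastforce dest: sum_mult_nonpos_nonneg_le_0[OF d_nonpos])
  show ?thesis using False unfolding sup infeasible by (simp add: top_ereal_def)
qed

end
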